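(* Let $\mathcal{H}=(V,\mathcal{A})$ be a multi-head HyTN in which every node of $V$ is the tail of at least one hyperarc, and let $G_{\mathcal{H}}$ be its associated mean payoff game. If $\mathcal{H}$ is consistent, then every node of $G_{\mathcal{H}}$ is a winning start position for Player 1.
   Context: A multi-head HyTN is a pair $\mathcal{H}=(V,\mathcal{A})$, $V$ a finite node set, $\mathcal{A}$ a finite set of hyperarcs $A=(t_A,H_A,w_A)$ with tail $t_A\in V$, nonempty head set $H_A\subseteq V\setminus\{t_A\}$ and weights $w_A(v)\in\mathbb{R}$ for $v\in H_A$. A scheduling $s:V\to\mathbb{R}$ is feasible if $s(t_A)\ge\min_{v\in H_A}\{s(v)-w_A(v)\}$ for all $A\in\mathcal{A}$; $\mathcal{H}$ is consistent if a feasible scheduling exists. A mean payoff game (MPG) is a finite directed graph with real arc weights whose node set is partitioned into $V_0$ (nodes of Player 0) and $V_1$ (nodes of Player 1), where every node has at least one outgoing arc. A play from a start node $v_0$ proceeds in moves: when the pebble is at $v_{t-1}\in V_p$, Player $p$ chooses an arc $e_t$ leaving $v_{t-1}$ and the pebble moves to its head $v_t$. The play ends at the first $t$ such that $v_t=v_{t'}$ for some $t'<t$; Player 0 wins if $\frac{1}{t-t'}\sum_{i=t'+1}^{t}w(e_i)<0$, otherwise Player 1 wins. A strategy for Player $p$ maps each history ending in a node of $V_p$ to an outgoing arc of that node. A node $s$ is a winning start position for Player 1 if Player 1 has a strategy such that every play starting at $s$ in which Player 1 follows it is won by Player 1. The associated game $G_{\mathcal{H}}$ has $V_0=V$, $V_1=\mathcal{A}$,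 and arc set $\{(t_A,A,0)\mid A\in\mathcal{A}\}\cup\{(A,h,w_A(h))\mid A\in\mathcal{A},h\in H_A\}$ (an arc $(x,y,w)$ goes from $x$ to $y$ with weight $w$). *)

theory Defs
  imports Main "HOL-Library.Multiset" Complex_Main
begin

text \<open>A hyperarc is a triple (tail, head set, weight function); the weight
function is only relevant on the head set.\<close>
type_synonym 'v hyperarc = "'v \<times> 'v set \<times> ('v \<Rightarrow> real)"

definition hytn :: "'v set \<Rightarrow> 'v hyperarc set \<Rightarrow> bool" where
  "hytn V As \<longleftrightarrow> finite V \<and> finite As \<and>
     (\<forall>(t, H, w) \<in> As. t \<in> V \<and> H \<noteq> {} \<and> H \<subseteq> V - {t})"

definition feasible_scheduling :: "'v hyperarc set \<Rightarrow> ('v \<Rightarrow> real) \<Rightarrow> bool" where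
  "feasible_scheduling As s \<longleftrightarrow>
     (\<forall>(t, H, w) \<in> As. s t \<ge> Min ((\<lambda>v. s v - w v) ` H))"

definition hytn_consistent :: "'v hyperarc set \<Rightarrow> bool" where
  "hytn_consistent As \<longleftrightarrow> (\<exists>s. feasible_scheduling As s)"

text \<open>An arc is a triple (source, target, weight). A game is given by the set
V1 of nodes of Player 1 and the arc set E; nodes not in V1 belong to Player 0.\<close>
type_synonym 'n arc = "'n \<times> 'n \<times> real"

definition play_nodes :: "'n \<Rightarrow> 'n arc list \<Rightarrow> 'n list" where
  "play_nodes s es = s # map (\<lambda>e. fst (snd e)) es"

definition path_from :: "'n arc set \<Rightarrow> 'n \<Rightarrow> 'n arc list \<Rightarrow> bool" where
  "path_from E s es \<longleftrightarrow> (\<forall>i < length es. es ! i \<in> E \<and> fst (es ! i) = play_nodes s es ! i)"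

text \<open>A strategy of Player 1 maps every history (start node and the moves so far)
ending in a node of V1 to an arc leaving that node.\<close>
definition strategy1 :: "'n set \<Rightarrow> 'n arc set \<Rightarrow> ('n \<Rightarrow> 'n arc list \<Rightarrow> 'n arc) \<Rightarrow> bool" where
  "strategy1 V1 E \<sigma> \<longleftrightarrow> (\<forall>s es. path_from E s es \<and> last (play_nodes s es) \<in> V1 \<longrightarrow>
       \<sigma> s es \<in> E \<and> fst (\<sigma> s es) = last (play_nodes s es))"

definition follows1 :: "'n set \<Rightarrow> ('n \<Rightarrow> 'n arc list \<Rightarrow> 'n arc) \<Rightarrow> 'n \<Rightarrow> 'n arc list \<Rightarrow> bool" where
  "follows1 V1 \<sigma> s es \<longleftrightarrow> (\<forall>i < length es. play_nodes s es ! i \<in> V1 \<longrightarrow> es ! i = \<sigma> s (take i es))"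

definition finished_play :: "'n \<Rightarrow> 'n arc list \<Rightarrow> bool" where
  "finished_play s es \<longleftrightarrow> es \<noteq> [] \<and> distinct (butlast (play_nodes s es)) \<and>
     last (play_nodes s es) \<in> set (butlast (play_nodes s es))"

definition cycle_start :: "'n \<Rightarrow> 'n arc list \<Rightarrow> nat" where
  "cycle_start s es = (THE i. i < length es \<and> play_nodes s es ! i = last (play_nodes s es))"

definition won_by_player1 :: "'n \<Rightarrow> 'n arc list \<Rightarrow> bool" where
  "won_by_player1 s es \<longleftrightarrow>
     (let t = length es; t' = cycle_start s es
      in \<not> ((\<Sum>e \<leftarrow> drop t' es. snd (snd e)) / real (t - t') < 0))"

definition winning_start1 :: "'n set \<Rightarrow> 'n arc set \<Rightarrow> 'n \<Rightarrow> bool" where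
  "winning_start1 V1 E s \<longleftrightarrow> (\<exists>\<sigma>. strategy1 V1 E \<sigma> \<and>
     (\<forall>es. path_from E s es \<and> follows1 V1 \<sigma> s es \<and> finished_play s es \<longrightarrow> won_by_player1 s es))"

definition assoc_V0 :: "'v set \<Rightarrow> ('v + 'v hyperarc) set" where
  "assoc_V0 V = Inl ` V"

definition assoc_V1 :: "'v hyperarc set \<Rightarrow> ('v + 'v hyperarc) set" where
  "assoc_V1 As = Inr ` As"

definition assoc_arcs :: "'v hyperarc set \<Rightarrow> ('v + 'v hyperarc) arc set" where
  "assoc_arcs As =
     {(Inl (fst A), Inr A, 0) | A. A \<in> As} \<union>
     {(Inr A, Inl h, snd (snd A) h) | A h. A \<in> As \<and> h \<in> fst (snd A)}"

end

theory Submission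
  imports Defs
begin

text \<open>A feasible scheduling s is a potential for the associated game: give a node v the
value s v and a hyperarc A the value s (t_A). Arcs into a hyperarc then have reduced weight
0, and feasibility lets Player 1 leave every hyperarc A through a head h with
s h - w_A h \<le> s (t_A), i.e. again with nonnegative reduced weight. Along any cycle the
reduced weights sum to the original ones, so every cycle closed in a play in which
Player 1 answers this way has nonnegative mean weight.\<close>

lemma length_play_nodes [simp]: "length (play_nodes s es) = Suc (length es)"
  by (simp add: play_nodes_def)

lemma play_nodes_nth_Suc: "i < length es \<Longrightarrow> play_nodes s es ! Suc i = fst (snd (es ! i))"
  by (simp add: play_nodes_def)

lemma last_play_nodes: "last (play_nodes s es) = play_nodes s es ! length es"
  by (simp add: last_conv_nth play_nodes_def)

lemma last_play_nodes_take:
  "i < length es \<Longrightarrow> last (play_nodes s (take i es)) = play_nodes s es ! i"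
  by (cases i) (auto simp: play_nodes_def last_conv_nth min_def)

lemma sum_list_drop_ge_telescope:
  fixes g :: "'a \<Rightarrow> real" and p :: "'b \<Rightarrow> real"
  assumes "\<forall>i < length es. p (ns ! Suc i) - p (ns ! i) \<le> g (es ! i)"
    and "k \<le> length es"
  shows "p (ns ! length es) - p (ns ! k) \<le> sum_list (map g (drop k es))"
  using assms(2)
proof (induction "length es - k" arbitrary: k)
  case 0
  then show ?case by simp
next
  case (Suc n)
  then have k: "k < length es" by simp
  have "drop k es = es ! k # drop (Suc k) es"
    using k by (simp add: Cons_nth_drop_Suc)
  moreover have "p (ns ! length es) - p (ns ! Suc k) \<le> sum_list (map g (drop (Suc k) es))"
    using Suc k by simp
  moreover have "p (ns ! Suc k) - p (ns ! k) \<le> g (es ! k)"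
    using assms(1) k by simp
  ultimately show ?case by simp
qed

lemma cycle_start_props:
  assumes "finished_play s es"
  shows "cycle_start s es < length es \<and> play_nodes s es ! cycle_start s es = last (play_nodes s es)"
proof -
  define ns where "ns = play_nodes s es"
  have distinct: "distinct (butlast ns)" and repeat: "last ns \<in> set (butlast ns)"
    using assms unfolding finished_play_def ns_def by auto
  have butlast_nth: "butlast ns ! i = ns ! i" if "i < length es" for i
    using that by (simp add: ns_def nth_butlast)
  have "\<exists>!i. i < length es \<and> ns ! i = last ns"
  proof -
    obtain i where i: "i < length es" "butlast ns ! i = last ns"
      using repeat by (auto simp: ns_def in_set_conv_nth)
    show ?thesis
    proof (rule ex1I[of _ i])
      show "i < length es \<and> ns ! i = last ns" using i butlast_nth by simp
    next
      fix j assume "j < length es \<and> ns ! j = last ns"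
      with i distinct butlast_nth show "j = i"
        by (metis length_butlast length_play_nodes diff_Suc_1 nth_eq_iff_index_eq ns_def)
    qed
  qed
  then show ?thesis
    unfolding cycle_start_def ns_def by (rule theI')
qed

lemma won_by_player1_if_potential:
  fixes p :: "'n \<Rightarrow> real"
  assumes "path_from E s es" and "finished_play s es"
    and "\<forall>e \<in> set es. p (fst (snd e)) - p (fst e) \<le> snd (snd e)"
  shows "won_by_player1 s es"
proof -
  define ns where "ns = play_nodes s es"
  define k where "k = cycle_start s es"
  have "p (ns ! Suc i) - p (ns ! i) \<le> snd (snd (es ! i))" if "i < length es" for i
  proof -
    have "fst (es ! i) = ns ! i" "fst (snd (es ! i)) = ns ! Suc i"
      using that assms(1) play_nodes_nth_Suc[OF that] by (auto simp: path_from_def ns_def)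
    then show ?thesis
      using that assms(3) nth_mem by metis
  qed
  then have "p (ns ! length es) - p (ns ! k) \<le> (\<Sum>e \<leftarrow> drop k es. snd (snd e))"
    using cycle_start_props[OF assms(2)] by (intro sum_list_drop_ge_telescope) (auto simp: k_def)
  moreover have "ns ! k = ns ! length es"
    using cycle_start_props[OF assms(2)] by (simp add: ns_def k_def last_play_nodes)
  ultimately have "0 \<le> (\<Sum>e \<leftarrow> drop k es. snd (snd e))" by simp
  then show ?thesis
    unfolding won_by_player1_def Let_def k_def by (simp add: not_less)
qed

lemma feasible_scheduling_head:
  assumes "hytn V As" and "feasible_scheduling As s" and "(t, H, w) \<in> As"
  shows "\<exists>h \<in> H. s h - w h \<le> s t"
proof -
  have "H \<noteq> {}" and "H \<subseteq> V" and "finite V"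
    using assms(1,3) unfolding hytn_def by auto
  then have "H \<noteq> {}" and "finite H"
    by (auto intro: finite_subset)
  then have "Min ((\<lambda>v. s v - w v) ` H) \<in> (\<lambda>v. s v - w v) ` H" by simp
  moreover have "Min ((\<lambda>v. s v - w v) ` H) \<le> s t"
    using assms(2,3) unfolding feasible_scheduling_def by auto
  ultimately show ?thesis by auto
qed

lemma feasible_scheduling_choice:
  assumes "hytn V As" and "feasible_scheduling As s"
  shows "\<exists>c. \<forall>A \<in> As. c A \<in> fst (snd A) \<and> s (c A) - snd (snd A) (c A) \<le> s (fst A)"
proof -
  have "\<forall>A \<in> As. \<exists>h. h \<in> fst (snd A) \<and> s h - snd (snd A) h \<le> s (fst A)"
    using feasible_scheduling_head[OF assms] by fastforce
  then show ?thesis by (rule bchoice)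
qed

definition scheduling_strategy ::
    "('v hyperarc \<Rightarrow> 'v) \<Rightarrow> ('v + 'v hyperarc) \<Rightarrow> ('v + 'v hyperarc) arc list \<Rightarrow> ('v + 'v hyperarc) arc"
  where "scheduling_strategy c s es =
    (case last (play_nodes s es) of
       Inr A \<Rightarrow> (Inr A, Inl (c A), snd (snd A) (c A))
     | Inl v \<Rightarrow> undefined)"

definition scheduling_potential :: "('v \<Rightarrow> real) \<Rightarrow> ('v + 'v hyperarc) \<Rightarrow> real"
  where "scheduling_potential s x = (case x of Inl v \<Rightarrow> s v | Inr A \<Rightarrow> s (fst A))"

lemma strategy1_scheduling_strategy:
  assumes "\<forall>A \<in> As. c A \<in> fst (snd A)"
  shows "strategy1 (assoc_V1 As) (assoc_arcs As) (scheduling_strategy c)"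
  using assms
  by (auto simp: strategy1_def assoc_V1_def assoc_arcs_def scheduling_strategy_def)

lemma scheduling_potential_le_weight:
  assumes choice: "\<forall>A \<in> As. s (c A) - snd (snd A) (c A) \<le> s (fst A)"
    and path: "path_from (assoc_arcs As) x es"
    and follows: "follows1 (assoc_V1 As) (scheduling_strategy c) x es"
    and e: "e \<in> set es"
  shows "scheduling_potential s (fst (snd e)) - scheduling_potential s (fst e) \<le> snd (snd e)"
proof -
  obtain i where i: "i < length es" "e = es ! i"
    using e by (auto simp: in_set_conv_nth)
  have arc: "e \<in> assoc_arcs As" and src: "fst e = play_nodes x es ! i"
    using path i unfolding path_from_def by auto
  from arc consider A where "e = (Inl (fst A), Inr A, 0)"
    | A h where "A \<in> As" "e = (Inr A, Inl h, snd (snd A) h)"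
    unfolding assoc_arcs_def by blast
  then show ?thesis
  proof cases
    case 1
    then show ?thesis by (simp add: scheduling_potential_def)
  next
    case (2 A h)
    then have node: "play_nodes x es ! i = Inr A"
      using src by simp
    then have "play_nodes x es ! i \<in> assoc_V1 As"
      using 2 by (simp add: assoc_V1_def)
    then have "e = scheduling_strategy c x (take i es)"
      using follows i unfolding follows1_def by simp
    also have "\<dots> = (Inr A, Inl (c A), snd (snd A) (c A))"
      using node by (simp add: scheduling_strategy_def last_play_nodes_take[OF i(1)])
    finally show ?thesis
      using choice \<open>A \<in> As\<close> by (auto simp: scheduling_potential_def)
  qed
qed

text \<open>The hypothesis that every node is a tail only ensures that every node of the game
has an outgoing arc; the winning strategy does not need it.\<close>

theorem mainTheorem8:
  fixes V :: "'v set" and As :: "'v hyperarc set"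
  assumes "hytn V As"
    and "\<forall>v \<in> V. \<exists>A \<in> As. fst A = v"
    and "hytn_consistent As"
  shows "\<forall>x \<in> assoc_V0 V \<union> assoc_V1 As. winning_start1 (assoc_V1 As) (assoc_arcs As) x"
proof
  fix x
  obtain s where feasible: "feasible_scheduling As s"
    using assms(3) unfolding hytn_consistent_def by blast
  obtain c where c: "\<forall>A \<in> As. c A \<in> fst (snd A) \<and> s (c A) - snd (snd A) (c A) \<le> s (fst A)"
    using feasible_scheduling_choice[OF assms(1) feasible] by blast
  show "winning_start1 (assoc_V1 As) (assoc_arcs As) x"
    unfolding winning_start1_def
  proof (intro exI conjI allI impI)
    show "strategy1 (assoc_V1 As) (assoc_arcs As) (scheduling_strategy c)"
      using c by (intro strategy1_scheduling_strategy) blast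
    fix es
    assume "path_from (assoc_arcs As) x es \<and> follows1 (assoc_V1 As) (scheduling_strategy c) x es
      \<and> finished_play x es"
    then show "won_by_player1 x es"
      using c scheduling_potential_le_weight[of As s c x es]
      by (intro won_by_player1_if_potential[where p = "scheduling_potential s"]) blast+
  qed
qed

end
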